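(* For every integer $d\ge 1$, the $d$-dimensional hypercube $Q_d$ satisfies $\sigma_T(Q_d)=2d-1$.
   Context: $Q_d=K_2\times\cdots\times K_2$ ($d$ factors) is the graph whose vertices are the 0-1 vectors of length $d$, two vertices adjacent iff they differ in exactly one coordinate. For a spanning tree $T$ of a connected graph $G$, $d_T(u,v)$ is the distance between $u$ and $v$ in $T$, $\sigma_T(G,T):=\max_{uv\in E(G)} d_T(u,v)$, and the tree-stretch is $\sigma_T(G):=\min\{\sigma_T(G,T): T \text{ a spanning tree of } G\}$. *)

theory Defs
  imports Main
begin

definition is_walk :: "'a set set \<Rightarrow> 'a list \<Rightarrow> bool" where
  "is_walk E xs \<longleftrightarrow> xs \<noteq> [] \<and> (\<forall>i. Suc i < length xs \<longrightarrow> {xs ! i, xs ! Suc i} \<in> E)"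

definition graph_connected :: "'a set \<Rightarrow> 'a set set \<Rightarrow> bool" where
  "graph_connected V E \<longleftrightarrow>
     (\<forall>u\<in>V. \<forall>v\<in>V. \<exists>xs. is_walk E xs \<and> hd xs = u \<and> last xs = v)"

definition is_cycle :: "'a set set \<Rightarrow> 'a list \<Rightarrow> bool" where
  "is_cycle E xs \<longleftrightarrow> length xs \<ge> 3 \<and> distinct xs \<and> is_walk E xs \<and> {last xs, hd xs} \<in> E"

definition acyclic_graph :: "'a set set \<Rightarrow> bool" where
  "acyclic_graph E \<longleftrightarrow> (\<nexists>xs. is_cycle E xs)"

definition spanning_tree :: "'a set \<Rightarrow> 'a set set \<Rightarrow> 'a set set \<Rightarrow> bool" where
  "spanning_tree V E T \<longleftrightarrow> T \<subseteq> E \<and> graph_connected V T \<and> acyclic_graph T"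

definition gdist :: "'a set set \<Rightarrow> 'a \<Rightarrow> 'a \<Rightarrow> nat" where
  "gdist E u v = (LEAST n. \<exists>xs. is_walk E xs \<and> hd xs = u \<and> last xs = v \<and> length xs = Suc n)"

definition stretch :: "'a set set \<Rightarrow> 'a set set \<Rightarrow> nat" where
  "stretch E T = Max {gdist T u v | u v. {u, v} \<in> E}"

definition tree_stretch :: "'a set \<Rightarrow> 'a set set \<Rightarrow> nat" where
  "tree_stretch V E = Min {stretch E T | T. spanning_tree V E T}"

text \<open>The hypercube Q_d: 0-1 vectors of length d (as boolean lists), adjacent iff
  they differ in exactly one coordinate.\<close>
definition hypercube_verts :: "nat \<Rightarrow> bool list set" where
  "hypercube_verts d = {xs. length xs = d}"

definition hypercube_edges :: "nat \<Rightarrow> bool list set set" where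
  "hypercube_edges d = {{x, y} | x y. x \<in> hypercube_verts d \<and> y \<in> hypercube_verts d \<and>
       card {i. i < d \<and> x ! i \<noteq> y ! i} = 1}"

end

theory Submission
  imports Defs
begin

(*
  For an edge ab of a spanning tree T, the branch of ab is the component of b
  in T - ab.  Suppose no tree edge ab separates the antipodes of a and b, and take a tree edge
  ab whose branch contains the antipode of b, with the branch as small as possible.  The tree
  path from b to its antipode leaves b through an edge bc whose branch is strictly smaller and
  contains the antipode of b, hence also that of c: a contradiction.  So some tree edge ab
  separates the antipodes of a and b.  The tree path between these two adjacent antipodes
  then passes through ab, and its parts before and after ab have length at least d - 1 each.

  Joining every nonzero vector to the vector obtained by clearing its first 1
  gives a spanning tree in which the distance between u and v is at most the sum of their
  weights, which is at most 2d - 1 when u and v are distinct.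
*)

lemma is_walk_Nil [simp]: "\<not> is_walk E []"
  by (simp add: is_walk_def)

lemma is_walk_singleton [simp]: "is_walk E [x]"
  by (simp add: is_walk_def)

lemma is_walk_Cons_Cons [simp]:
  "is_walk E (x # y # xs) \<longleftrightarrow> {x, y} \<in> E \<and> is_walk E (y # xs)"
  by (auto simp: is_walk_def nth_Cons split: nat.splits)

lemma is_walk_Cons: "is_walk E (x # w) \<longleftrightarrow> w = [] \<or> {x, hd w} \<in> E \<and> is_walk E w"
  by (cases w) auto

lemma is_walk_mono: "is_walk E w \<Longrightarrow> E \<subseteq> F \<Longrightarrow> is_walk F w"
  by (induction w) (auto simp: is_walk_Cons)

lemma is_walk_append:
  "is_walk E xs \<Longrightarrow> is_walk E ys \<Longrightarrow> {last xs, hd ys} \<in> E \<Longrightarrow> is_walk E (xs @ ys)"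
  by (induction xs rule: induct_list012) (cases ys; auto)+

lemma is_walk_prefix: "is_walk E (xs @ ys) \<Longrightarrow> xs \<noteq> [] \<Longrightarrow> is_walk E xs"
  by (induction xs) (auto simp: is_walk_Cons)

lemma is_walk_suffix: "is_walk E (xs @ ys) \<Longrightarrow> ys \<noteq> [] \<Longrightarrow> is_walk E ys"
  by (induction xs) (auto simp: is_walk_Cons)

lemma is_walk_rev: "is_walk E w \<Longrightarrow> is_walk E (rev w)"
proof (induction w)
  case (Cons x w)
  then show ?case
    by (cases "w = []")
      (auto simp: is_walk_Cons last_rev insert_commute intro: is_walk_append[of E "rev w" "[x]"])
qed simp

lemma is_walk_join:
  assumes "is_walk E xs" "is_walk E ys" "last xs = hd ys"
  obtains w where "is_walk E w" "hd w = hd xs" "last w = last ys"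
    "length w = length xs + length ys - 1"
proof -
  obtain y zs where ys: "ys = y # zs"
    using assms(2) by (cases ys) auto
  have "is_walk E (xs @ zs)"
    using assms ys by (cases "zs = []") (auto simp: is_walk_Cons intro: is_walk_append)
  moreover have "xs \<noteq> []"
    using assms(1) by auto
  ultimately show ?thesis
    using that[of "xs @ zs"] assms(3) ys by (cases "zs = []") auto
qed

lemma is_walk_prefix_to:
  assumes "is_walk E w" "y \<in> set w"
  obtains w' where "is_walk E w'" "hd w' = hd w" "last w' = y"
proof -
  obtain xs ys where w: "w = xs @ y # ys"
    using assms(2) by (meson split_list)
  then have "is_walk E (xs @ [y])"
    using assms(1) is_walk_prefix[of E "xs @ [y]" ys] by simp
  moreover have "hd (xs @ [y]) = hd w"
    using w by (cases xs) auto
  ultimately show ?thesis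
    using that by simp
qed

lemma set_walk_subset: "is_walk E w \<Longrightarrow> set w \<subseteq> insert (hd w) (\<Union>E)"
  by (induction w) (auto simp: is_walk_Cons)

lemma walk_to_path:
  "is_walk E w \<Longrightarrow> \<exists>p. is_walk E p \<and> distinct p \<and> hd p = hd w \<and> last p = last w"
proof (induction w)
  case (Cons x w)
  show ?case
  proof (cases "w = []")
    case True
    then show ?thesis by (intro exI[of _ "[x]"]) simp
  next
    case False
    then obtain p where p: "is_walk E p" "distinct p" "hd p = hd w" "last p = last w"
      using Cons by (auto simp: is_walk_Cons)
    show ?thesis
    proof (cases "x \<in> set p")
      case True
      then obtain p1 p2 where "p = p1 @ x # p2"
        by (meson split_list)
      then show ?thesis
        using p \<open>w \<noteq> []\<close> by (intro exI[of _ "x # p2"]) (auto intro: is_walk_suffix)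
    next
      case False
      then show ?thesis
        using p Cons.prems \<open>w \<noteq> []\<close> by (intro exI[of _ "x # p"]) (auto simp: is_walk_Cons)
    qed
  qed
qed simp

lemma is_walk_Diff_edge: "is_walk E w \<Longrightarrow> z \<notin> set w \<Longrightarrow> z \<in> e \<Longrightarrow> is_walk (E - {e}) w"
  by (induction w) (auto simp: is_walk_Cons)

lemma gdist_less_length:
  assumes "is_walk E w"
  shows "gdist E (hd w) (last w) < length w"
proof -
  have "gdist E (hd w) (last w) \<le> length w - 1"
    unfolding gdist_def using assms by (intro Least_le) (cases w; auto)
  then show ?thesis
    using assms by (cases w) auto
qed

lemma le_gdist:
  assumes "is_walk E w0" "hd w0 = u" "last w0 = v"
    and "\<And>w. is_walk E w \<Longrightarrow> hd w = u \<Longrightarrow> last w = v \<Longrightarrow> k < length w"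
  shows "k \<le> gdist E u v"
  unfolding gdist_def
proof (rule LeastI2_ex)
  show "\<exists>n xs. is_walk E xs \<and> hd xs = u \<and> last xs = v \<and> length xs = Suc n"
    using assms(1-3) by (intro exI[of _ "length w0 - 1"] exI[of _ w0]) (cases w0; auto)
  show "k \<le> n" if "\<exists>xs. is_walk E xs \<and> hd xs = u \<and> last xs = v \<and> length xs = Suc n" for n
    using that assms(4) by fastforce
qed

lemma finite_stretch_set: "finite (\<Union>E) \<Longrightarrow> finite {gdist T u v | u v. {u, v} \<in> E}"
proof (rule finite_subset)
  show "{gdist T u v | u v. {u, v} \<in> E} \<subseteq> (\<lambda>(u, v). gdist T u v) ` (\<Union>E \<times> \<Union>E)"
    by auto
qed simp

lemma gdist_le_stretch: "finite (\<Union>E) \<Longrightarrow> {u, v} \<in> E \<Longrightarrow> gdist T u v \<le> stretch E T"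
  unfolding stretch_def by (intro Max_ge finite_stretch_set) blast+

lemma stretch_le:
  assumes "finite (\<Union>E)" "{u0, v0} \<in> E" "\<And>u v. {u, v} \<in> E \<Longrightarrow> gdist T u v \<le> k"
  shows "stretch E T \<le> k"
  unfolding stretch_def using assms by (intro Max.boundedI finite_stretch_set) blast+

lemma tree_stretch_eqI:
  assumes "finite (\<Union>E)" "spanning_tree V E T0" "stretch E T0 \<le> k"
    and "\<And>T. spanning_tree V E T \<Longrightarrow> k \<le> stretch E T"
  shows "tree_stretch V E = k"
proof -
  have "finite {stretch E T | T. spanning_tree V E T}"
  proof (rule finite_subset)
    show "{stretch E T | T. spanning_tree V E T} \<subseteq> stretch E ` Pow E"
      unfolding spanning_tree_def by blast
    show "finite (stretch E ` Pow E)"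
      using finite_UnionD[OF assms(1)] by simp
  qed
  moreover have "stretch E T0 = k"
    using assms(2-4) by (simp add: le_antisym)
  ultimately show ?thesis
    unfolding tree_stretch_def using assms(2,4) by (intro Min_eqI) blast+
qed

section \<open>Trees\<close>

lemma is_cycle_nth_edge:
  assumes "is_cycle E xs" "j < length xs"
  shows "{xs ! j, xs ! (if Suc j < length xs then Suc j else 0)} \<in> E"
proof (cases "Suc j < length xs")
  case True
  then show ?thesis
    using assms(1) unfolding is_cycle_def is_walk_def by simp
next
  case False
  then have "j = length xs - 1" "xs \<noteq> []"
    using assms(2) by auto
  then show ?thesis
    using False assms(1) unfolding is_cycle_def by (simp add: last_conv_nth hd_conv_nth)
qed

(* On a cycle, both neighbours of a vertex of maximal rank would have to be its parent. *)
lemma acyclic_graph_parent_edges: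
  fixes r :: "'a \<Rightarrow> nat"
  assumes "\<And>e. e \<in> T \<Longrightarrow> \<exists>x. e = {x, p x} \<and> r (p x) < r x"
  shows "acyclic_graph T"
  unfolding acyclic_graph_def
proof
  assume "\<exists>xs. is_cycle T xs"
  then obtain xs where c: "is_cycle T xs"
    by blast
  define n where "n = length xs"
  define nxt where "nxt j = (if Suc j < n then Suc j else 0)" for j
  define prv where "prv j = (if j = 0 then n - 1 else j - 1)" for j
  have edge: "{xs ! j, xs ! nxt j} \<in> T" if "j < n" for j
    using is_cycle_nth_edge[OF c] that unfolding nxt_def n_def .
  have "n \<ge> 3" "distinct xs"
    using c unfolding is_cycle_def n_def by auto
  have "Max (r ` set xs) \<in> r ` set xs"
    using \<open>n \<ge> 3\<close> unfolding n_def by (intro Max_in) auto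
  then obtain i where i: "i < n" "r (xs ! i) = Max (r ` set xs)"
    unfolding n_def by (auto simp: in_set_conv_nth)
  have top: "r (xs ! j) \<le> r (xs ! i)" if "j < n" for j
    using that i(2) unfolding n_def by simp
  have to_parent: "y = p (xs ! i)" if "{xs ! i, y} \<in> T" "r y \<le> r (xs ! i)" for y
    using assms[OF that(1)] that(2) by (auto simp: doubleton_eq_iff)
  have "nxt i < n" "prv i < n" "nxt (prv i) = i"
    using i(1) \<open>n \<ge> 3\<close> unfolding nxt_def prv_def by auto
  have "xs ! nxt i = p (xs ! i)"
    using to_parent[OF edge[OF i(1)] top[OF \<open>nxt i < n\<close>]] .
  moreover have "{xs ! i, xs ! prv i} \<in> T"
    using edge[OF \<open>prv i < n\<close>] \<open>nxt (prv i) = i\<close> by (simp add: insert_commute)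
  then have "xs ! prv i = p (xs ! i)"
    using to_parent top[OF \<open>prv i < n\<close>] by blast
  ultimately have "nxt i = prv i"
    using \<open>distinct xs\<close> \<open>nxt i < n\<close> \<open>prv i < n\<close> nth_eq_iff_index_eq
    unfolding n_def by metis
  then show False
    using i(1) \<open>n \<ge> 3\<close> unfolding nxt_def prv_def by (auto split: if_splits)
qed

definition branch :: "'a set set \<Rightarrow> 'a \<Rightarrow> 'a \<Rightarrow> 'a set" where
  "branch T a b = {x. \<exists>w. is_walk (T - {{a, b}}) w \<and> hd w = b \<and> last w = x}"

lemma branch_root: "b \<in> branch T a b"
  unfolding branch_def by (intro CollectI exI[of _ "[b]"]) simp

lemma branch_step:
  assumes "x \<in> branch T a b" "{x, y} \<in> T" "{x, y} \<noteq> {a, b}"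
  shows "y \<in> branch T a b"
proof -
  obtain w where w: "is_walk (T - {{a, b}}) w" "hd w = b" "last w = x"
    using assms(1) unfolding branch_def by auto
  have "is_walk (T - {{a, b}}) (w @ [y])"
    using w assms(2,3) by (intro is_walk_append) auto
  moreover have "hd (w @ [y]) = b"
    using w by (cases w) auto
  ultimately show ?thesis
    unfolding branch_def by force
qed

lemma branch_subset: "branch T a b \<subseteq> insert b (\<Union>T)"
proof
  fix x
  assume "x \<in> branch T a b"
  then obtain w where w: "is_walk (T - {{a, b}}) w" "hd w = b" "last w = x"
    unfolding branch_def by auto
  then have "x \<in> set w"
    by (cases w) auto
  then show "x \<in> insert b (\<Union>T)"
    using set_walk_subset[OF w(1)] w(2) by blast
qed

lemma tail_notin_branch:
  assumes "acyclic_graph T" "{a, b} \<in> T" "a \<noteq> b"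
  shows "a \<notin> branch T a b"
proof
  assume "a \<in> branch T a b"
  then obtain w where w: "is_walk (T - {{a, b}}) w" "hd w = b" "last w = a"
    unfolding branch_def by auto
  then obtain p where p: "is_walk (T - {{a, b}}) p" "distinct p" "hd p = b" "last p = a"
    using walk_to_path[OF w(1)] by auto
  then obtain c q where pq: "p = b # c # q"
    using assms(3) by (cases p; cases "tl p") auto
  have "q \<noteq> []"
    using p pq by (auto simp: insert_commute)
  moreover have "is_walk T p"
    using p(1) by (rule is_walk_mono) blast
  ultimately have "is_cycle T p"
    using p(2-4) pq assms(2) unfolding is_cycle_def by (cases q) auto
  then show False
    using assms(1) unfolding acyclic_graph_def by blast
qed

lemma walk_enters_branch:
  "is_walk T w \<Longrightarrow> hd w \<notin> branch T a b \<Longrightarrow> last w \<in> branch T a b \<Longrightarrow>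
    \<exists>w1 w2. w = w1 @ w2 \<and> is_walk T w1 \<and> is_walk T w2 \<and>
      hd w1 = hd w \<and> last w1 = a \<and> hd w2 = b \<and> last w2 = last w"
proof (induction w)
  case (Cons x w)
  have "w \<noteq> []"
    using Cons.prems(2,3) by auto
  then have xw: "{x, hd w} \<in> T" "is_walk T w"
    using Cons.prems(1) by (auto simp: is_walk_Cons)
  show ?case
  proof (cases "hd w \<in> branch T a b")
    case False
    then obtain w1 w2 where w: "w = w1 @ w2" "is_walk T w1" "is_walk T w2"
        "hd w1 = hd w" "last w1 = a" "hd w2 = b" "last w2 = last w"
      using Cons.IH xw(2) Cons.prems(3) \<open>w \<noteq> []\<close> by auto
    moreover have "w1 \<noteq> []"
      using w(2) by auto
    ultimately have "is_walk T (x # w1)"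
      using xw(1) by (simp add: is_walk_Cons)
    then show ?thesis
      using w \<open>w1 \<noteq> []\<close> \<open>w \<noteq> []\<close> by (intro exI[of _ "x # w1"] exI[of _ w2]) simp
  next
    case True
    have "{x, hd w} = {a, b}"
    proof (rule ccontr)
      assume "{x, hd w} \<noteq> {a, b}"
      then have "x \<in> branch T a b"
        using branch_step[OF True, of x] xw(1) by (simp add: insert_commute)
      then show False
        using Cons.prems(2) by simp
    qed
    moreover have "x \<noteq> b"
      using Cons.prems(2) branch_root by force
    ultimately have "x = a" "hd w = b"
      by (auto simp: doubleton_eq_iff)
    then show ?thesis
      using xw \<open>w \<noteq> []\<close> by (intro exI[of _ "[x]"] exI[of _ w]) simp
  qed
qed simp

lemma walk_leaves_into_branch:
  assumes "is_walk F w" "F \<subseteq> T" "hd w = b" "last w = z" "z \<noteq> b"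
  obtains c where "{b, c} \<in> F" "b \<noteq> c" "z \<in> branch T b c"
proof -
  obtain p where p: "is_walk F p" "distinct p" "hd p = b" "last p = z"
    using walk_to_path[OF assms(1)] assms(3,4) by auto
  then obtain c q where pq: "p = b # c # q"
    using assms(5) by (cases p; cases "tl p") auto
  have "is_walk (T - {{b, c}}) (c # q)"
    using p pq assms(2) by (intro is_walk_Diff_edge[of _ _ b]) (auto intro: is_walk_mono)
  then have "z \<in> branch T b c"
    using p pq unfolding branch_def by (intro CollectI exI[of _ "c # q"]) simp
  moreover have "{b, c} \<in> F" "b \<noteq> c"
    using p pq by auto
  ultimately show ?thesis
    using that by blast
qed

lemma branch_psubset:
  assumes "acyclic_graph T" "{a, b} \<in> T" "{b, c} \<in> T" "b \<noteq> c" "{b, c} \<noteq> {a, b}"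
  shows "branch T b c \<subset> branch T a b"
proof -
  have b: "b \<notin> branch T b c"
    using tail_notin_branch[OF assms(1,3,4)] .
  have a: "a \<notin> branch T b c"
    using branch_step[of a T b c b] b assms(2,5) by (auto simp: insert_commute)
  have "x \<in> branch T a b" if x: "x \<in> branch T b c" for x
  proof -
    obtain w where w: "is_walk (T - {{b, c}}) w" "hd w = c" "last w = x"
      using x unfolding branch_def by auto
    have "set w \<subseteq> branch T b c"
      using is_walk_prefix_to[OF w(1)] w(2) unfolding branch_def by blast
    then have "is_walk (T - {{a, b}}) w"
      using a is_walk_Diff_edge[OF is_walk_mono[OF w(1)], of T a "{a, b}"] by blast
    then have "is_walk (T - {{a, b}}) (b # w)"
      using w assms(3,5) by (cases w) (auto simp: is_walk_Cons)
    then show ?thesis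
      using w unfolding branch_def by (intro CollectI exI[of _ "b # w"]) (cases w; simp)
  qed
  then show ?thesis
    using b branch_root[of b T a] by blast
qed

lemma tree_edge_separating_map:
  assumes "acyclic_graph T" "finite (\<Union>T)" "\<And>x. x \<in> \<Union>T \<Longrightarrow> f x \<noteq> x"
    and "is_walk T w" "last w = f (hd w)" "f (hd w) \<noteq> hd w"
  shows "\<exists>a b. {a, b} \<in> T \<and> (f a \<in> branch T a b \<longleftrightarrow> f b \<notin> branch T a b)"
proof (rule ccontr)
  assume "\<not> ?thesis"
  then have same_side: "f a \<in> branch T a b \<longleftrightarrow> f b \<in> branch T a b" if "{a, b} \<in> T" for a b
    using that by blast
  define G where "G = {(a, b). {a, b} \<in> T \<and> a \<noteq> b \<and> f b \<in> branch T a b}"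
  have descend: "\<exists>c. (b, c) \<in> G \<and> branch T b c \<subset> branch T a b" if "(a, b) \<in> G" for a b
  proof -
    have ab: "{a, b} \<in> T" "f b \<in> branch T a b"
      using that unfolding G_def by auto
    then obtain w where w: "is_walk (T - {{a, b}}) w" "hd w = b" "last w = f b"
      unfolding branch_def by auto
    moreover have "f b \<noteq> b"
      using assms(3) ab(1) by blast
    ultimately obtain c where c: "{b, c} \<in> T - {{a, b}}" "b \<noteq> c" "f b \<in> branch T b c"
      using walk_leaves_into_branch[OF w(1) Diff_subset] by metis
    then have "(b, c) \<in> G"
      using same_side[of b c] unfolding G_def by auto
    moreover have "branch T b c \<subset> branch T a b"
      using branch_psubset[OF assms(1) ab(1)] c by auto
    ultimately show ?thesis
      by blast
  qed
  have "(a, b) \<notin> G" for a b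
  proof (induction "card (branch T a b)" arbitrary: a b rule: less_induct)
    case less
    show ?case
    proof
      assume "(a, b) \<in> G"
      then obtain c where "(b, c) \<in> G" "branch T b c \<subset> branch T a b"
        using descend by blast
      moreover have "finite (branch T a b)"
        using branch_subset assms(2) by (metis finite_insert finite_subset)
      ultimately show False
        using less psubset_card_mono by blast
    qed
  qed
  moreover obtain c where "{hd w, c} \<in> T" "hd w \<noteq> c" "f (hd w) \<in> branch T (hd w) c"
    using walk_leaves_into_branch[OF assms(4) order_refl refl assms(5) assms(6)] by blast
  then have "(hd w, c) \<in> G"
    using same_side unfolding G_def by auto
  ultimately show False
    by blast
qed

section \<open>The hypercube\<close>

(* Lists of different lengths are compared only on their common prefix. *)
fun hamming :: "bool list \<Rightarrow> bool list \<Rightarrow> nat" where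
  "hamming (a # x) (b # y) = (if a = b then 0 else 1) + hamming x y"
| "hamming _ _ = 0"

lemma card_differing_eq_hamming:
  "length x = length y \<Longrightarrow> card {i. i < length x \<and> x ! i \<noteq> y ! i} = hamming x y"
proof (induction x y rule: list_induct2)
  case (Cons a x b y)
  let ?D = "{i. i < length x \<and> x ! i \<noteq> y ! i}"
  have "{i. i < length (a # x) \<and> (a # x) ! i \<noteq> (b # y) ! i} =
      (if a = b then Suc ` ?D else insert 0 (Suc ` ?D))" (is "?L = ?R")
  proof (rule set_eqI)
    show "i \<in> ?L \<longleftrightarrow> i \<in> ?R" for i
      by (cases i) auto
  qed
  then show ?case
    using Cons.IH by (simp add: card_image card_insert_if)
qed simp

lemma hamming_commute: "hamming x y = hamming y x"
  by (induction x y rule: hamming.induct) auto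

lemma hamming_self [simp]: "hamming x x = 0"
  by (induction x) auto

lemma hamming_le_length: "hamming x y \<le> length x"
  by (induction x y rule: hamming.induct) auto

lemma hamming_triangle: "length x = length y \<Longrightarrow> hamming x z \<le> hamming x y + hamming y z"
proof (induction x y arbitrary: z rule: list_induct2)
  case (Cons a x b y)
  have "hamming x (tl z) \<le> hamming x y + hamming y (tl z)"
    by (rule Cons.IH)
  then show ?case
    by (cases z) auto
qed simp

definition antipode :: "bool list \<Rightarrow> bool list" where
  "antipode = map Not"

lemma length_antipode [simp]: "length (antipode x) = length x"
  by (simp add: antipode_def)

lemma hamming_antipode:
  "length x = length y \<Longrightarrow> hamming (antipode x) y = length x - hamming x y"
proof (induction x y rule: list_induct2)
  case (Cons a x b y)
  then show ?case
    using hamming_le_length[of x y] by (auto simp: antipode_def)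
qed (simp add: antipode_def)

lemma hamming_antipode_antipode [simp]: "hamming (antipode x) (antipode y) = hamming x y"
  by (induction x y rule: hamming.induct) (auto simp: antipode_def)

lemma antipode_neq: "x \<noteq> [] \<Longrightarrow> antipode x \<noteq> x"
  by (cases x) (auto simp: antipode_def)

lemma hypercube_edge_iff:
  "{x, y} \<in> hypercube_edges d \<longleftrightarrow> length x = d \<and> length y = d \<and> hamming x y = 1"
proof
  assume "{x, y} \<in> hypercube_edges d"
  then obtain x' y' where e: "{x, y} = {x', y'}" "length x' = d" "length y' = d"
      "card {i. i < d \<and> x' ! i \<noteq> y' ! i} = 1"
    unfolding hypercube_edges_def hypercube_verts_def by blast
  moreover have "hamming x' y' = 1"
    using e card_differing_eq_hamming[of x' y'] by simp
  ultimately show "length x = d \<and> length y = d \<and> hamming x y = 1"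
    by (auto simp: doubleton_eq_iff hamming_commute)
next
  assume xy: "length x = d \<and> length y = d \<and> hamming x y = 1"
  then have "card {i. i < d \<and> x ! i \<noteq> y ! i} = 1"
    using card_differing_eq_hamming[of x y] by simp
  then show "{x, y} \<in> hypercube_edges d"
    using xy unfolding hypercube_edges_def hypercube_verts_def
    by (intro CollectI exI[of _ x] exI[of _ y]) simp
qed

lemma Union_hypercube_edges: "\<Union>(hypercube_edges d) \<subseteq> hypercube_verts d"
  unfolding hypercube_edges_def by blast

lemma finite_hypercube_verts: "finite (hypercube_verts d)"
  unfolding hypercube_verts_def using finite_lists_length_eq[of "UNIV :: bool set" d] by simp

lemma finite_Union_hypercube_edges: "finite (\<Union>(hypercube_edges d))"
  using finite_subset[OF Union_hypercube_edges finite_hypercube_verts] .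

lemma hamming_walk_less_length:
  "is_walk (hypercube_edges d) w \<Longrightarrow> hamming (hd w) (last w) < length w"
proof (induction w)
  case (Cons x w)
  show ?case
  proof (cases "w = []")
    case False
    then have "length x = d" "length (hd w) = d" "hamming x (hd w) = 1"
      "is_walk (hypercube_edges d) w"
      using Cons.prems by (auto simp: is_walk_Cons hypercube_edge_iff)
    then show ?thesis
      using Cons.IH hamming_triangle[of x "hd w" "last w"] False by simp
  qed simp
qed simp

lemma hypercube_gdist_across_branch:
  assumes "T \<subseteq> hypercube_edges d" "is_walk T w0" "hd w0 = u" "last w0 = v"
    and "u \<notin> branch T a b" "v \<in> branch T a b"
  shows "hamming u a + hamming b v < gdist T u v"
proof -
  have "hamming u a + hamming b v + 1 \<le> gdist T u v"
  proof (rule le_gdist[OF assms(2-4)])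
    fix w
    assume w: "is_walk T w" "hd w = u" "last w = v"
    then have "hd w \<notin> branch T a b" "last w \<in> branch T a b"
      using assms(5,6) by auto
    from walk_enters_branch[OF w(1) this]
    obtain w1 w2 where ws: "w = w1 @ w2" "is_walk T w1" "is_walk T w2"
        "hd w1 = u" "last w1 = a" "hd w2 = b" "last w2 = v"
      using w(2,3) by auto
    have "hamming u a < length w1" "hamming b v < length w2"
      using ws hamming_walk_less_length[OF is_walk_mono[OF _ assms(1)]] by metis+
    then show "hamming u a + hamming b v + 1 < length w"
      using ws(1) by simp
  qed
  then show ?thesis
    by simp
qed

lemma hypercube_tree_separates_antipodes:
  assumes T: "spanning_tree (hypercube_verts d) (hypercube_edges d) T" and "d \<ge> 1"
  obtains a b where "{a, b} \<in> T" "antipode a \<in> branch T a b \<longleftrightarrow> antipode b \<notin> branch T a b"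
proof -
  have TE: "T \<subseteq> hypercube_edges d" and conn: "graph_connected (hypercube_verts d) T"
    and ac: "acyclic_graph T"
    using T unfolding spanning_tree_def by auto
  have verts: "\<Union>T \<subseteq> hypercube_verts d"
    using TE Union_hypercube_edges by blast
  then have fin: "finite (\<Union>T)"
    using finite_hypercube_verts finite_subset by blast
  have moves: "antipode x \<noteq> x" if "x \<in> \<Union>T" for x
  proof -
    have "length x = d"
      using that verts by (auto simp: hypercube_verts_def)
    then have "x \<noteq> []"
      using assms(2) by auto
    then show ?thesis
      by (rule antipode_neq)
  qed
  define x0 where "x0 = replicate d False"
  have "x0 \<in> hypercube_verts d" "antipode x0 \<in> hypercube_verts d"
    by (simp_all add: x0_def hypercube_verts_def)
  then obtain w0 where w0: "is_walk T w0" "hd w0 = x0" "last w0 = antipode x0"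
    using conn unfolding graph_connected_def by blast
  have "antipode x0 \<noteq> x0"
    using antipode_neq assms(2) by (simp add: x0_def)
  then show ?thesis
    using tree_edge_separating_map[OF ac fin moves w0(1)] w0 that by auto
qed

lemma hypercube_spanning_tree_stretch_ge:
  assumes T: "spanning_tree (hypercube_verts d) (hypercube_edges d) T" and "d \<ge> 1"
  shows "2 * d - 1 \<le> stretch (hypercube_edges d) T"
proof -
  have TE: "T \<subseteq> hypercube_edges d" and conn: "graph_connected (hypercube_verts d) T"
    using T unfolding spanning_tree_def by auto
  obtain a b where ab: "{a, b} \<in> T"
    and sep: "antipode a \<in> branch T a b \<longleftrightarrow> antipode b \<notin> branch T a b"
    using hypercube_tree_separates_antipodes[OF assms] .
  have a: "length a = d" and b: "length b = d" and "hamming a b = 1"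
    using ab TE by (auto simp: hypercube_edge_iff)
  obtain x y where xy: "{x, y} = {a, b}"
    "antipode x \<notin> branch T a b" "antipode y \<in> branch T a b"
    using sep by (cases "antipode a \<in> branch T a b") blast+
  have x: "length x = d" "hamming x a \<le> 1" and y: "length y = d" "hamming y b \<le> 1"
    and "hamming x y = 1"
    using xy a b \<open>hamming a b = 1\<close> by (auto simp: doubleton_eq_iff hamming_commute)
  have "d - 1 \<le> hamming (antipode x) a" "d - 1 \<le> hamming b (antipode y)"
    using x y a b hamming_antipode[of x a] hamming_antipode[of y b] hamming_commute[of b]
    by auto
  have "antipode x \<in> hypercube_verts d" "antipode y \<in> hypercube_verts d"
    using x y by (simp_all add: hypercube_verts_def)
  then obtain w where w: "is_walk T w" "hd w = antipode x" "last w = antipode y"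
    using conn unfolding graph_connected_def by blast
  have "2 * d - 1 \<le> gdist T (antipode x) (antipode y)"
    using hypercube_gdist_across_branch[OF TE w xy(2,3)] \<open>d - 1 \<le> hamming (antipode x) a\<close>
      \<open>d - 1 \<le> hamming b (antipode y)\<close> assms(2) by linarith
  also have "\<dots> \<le> stretch (hypercube_edges d) T"
    using x y \<open>hamming x y = 1\<close>
    by (intro gdist_le_stretch[OF finite_Union_hypercube_edges]) (simp add: hypercube_edge_iff)
  finally show ?thesis .
qed

section \<open>A spanning tree of stretch \<open>2d - 1\<close>\<close>

fun clear_first :: "bool list \<Rightarrow> bool list" where
  "clear_first [] = []"
| "clear_first (True # x) = False # x"
| "clear_first (False # x) = False # clear_first x"

definition weight :: "bool list \<Rightarrow> nat" where
  "weight x = length (filter id x)"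

definition clear_first_tree :: "nat \<Rightarrow> bool list set set" where
  "clear_first_tree d = {{x, clear_first x} | x. length x = d \<and> True \<in> set x}"

lemma length_clear_first [simp]: "length (clear_first x) = length x"
  by (induction x rule: clear_first.induct) auto

lemma weight_clear_first: "True \<in> set x \<Longrightarrow> Suc (weight (clear_first x)) = weight x"
  unfolding weight_def by (induction x rule: clear_first.induct) auto

lemma hamming_clear_first: "True \<in> set x \<Longrightarrow> hamming x (clear_first x) = 1"
  by (induction x rule: clear_first.induct) auto

lemma weight_eq_length:
  assumes "weight x = length x"
  shows "x = replicate (length x) True"
proof -
  have "\<forall>y\<in>set x. y"
    using assms unfolding weight_def by (metis id_apply length_filter_less less_irrefl)
  then show ?thesis
    using replicate_length_same[of x True] by simp
qed

lemma clear_first_tree_subset: "clear_first_tree d \<subseteq> hypercube_edges d"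
  unfolding clear_first_tree_def by (auto simp: hypercube_edge_iff hamming_clear_first)

lemma clear_first_tree_walk_to_zero:
  "length x = d \<Longrightarrow> \<exists>w. is_walk (clear_first_tree d) w \<and> hd w = x \<and>
     last w = replicate d False \<and> length w = Suc (weight x)"
proof (induction "weight x" arbitrary: x)
  case 0
  then have "x = replicate d False"
    using replicate_length_same[of x False] by (auto simp: weight_def filter_empty_conv)
  then show ?case
    using "0.hyps" by (intro exI[of _ "[x]"]) simp
next
  case (Suc n)
  then have "filter id x \<noteq> []"
    unfolding weight_def by auto
  then have "True \<in> set x"
    by (auto simp: filter_empty_conv)
  then have "weight (clear_first x) = n"
    using Suc.hyps(2) weight_clear_first[OF \<open>True \<in> set x\<close>] by linarith
  then obtain w where w: "is_walk (clear_first_tree d) w" "hd w = clear_first x"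
      "last w = replicate d False" "length w = Suc n"
    using Suc.hyps(1)[of "clear_first x"] Suc.prems by auto
  have "{x, clear_first x} \<in> clear_first_tree d"
    using Suc.prems \<open>True \<in> set x\<close> unfolding clear_first_tree_def by blast
  then have "is_walk (clear_first_tree d) (x # w)"
    using w by (cases w) (auto simp: is_walk_Cons)
  then show ?case
    using w Suc.hyps(2) by (intro exI[of _ "x # w"]) (cases w; simp)
qed

lemma clear_first_tree_walk:
  assumes "length u = d" "length v = d"
  obtains w where "is_walk (clear_first_tree d) w" "hd w = u" "last w = v"
    "length w = Suc (weight u + weight v)"
proof -
  obtain w1 where w1: "is_walk (clear_first_tree d) w1" "hd w1 = u"
      "last w1 = replicate d False" "length w1 = Suc (weight u)"
    using clear_first_tree_walk_to_zero[OF assms(1)] by blast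
  obtain w2 where w2: "is_walk (clear_first_tree d) w2" "hd w2 = v"
      "last w2 = replicate d False" "length w2 = Suc (weight v)"
    using clear_first_tree_walk_to_zero[OF assms(2)] by blast
  have "is_walk (clear_first_tree d) (rev w2)" "last w1 = hd (rev w2)"
    using w1 w2 is_walk_rev by (auto simp: hd_rev)
  then obtain w where "is_walk (clear_first_tree d) w" "hd w = hd w1" "last w = last (rev w2)"
      "length w = length w1 + length (rev w2) - 1"
    by (rule is_walk_join[OF w1(1)])
  then show ?thesis
    using that w1 w2 by (simp add: last_rev)
qed

lemma clear_first_tree_spanning:
  "spanning_tree (hypercube_verts d) (hypercube_edges d) (clear_first_tree d)"
  unfolding spanning_tree_def
proof (intro conjI)
  show "clear_first_tree d \<subseteq> hypercube_edges d"
    by (rule clear_first_tree_subset)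
  show "graph_connected (hypercube_verts d) (clear_first_tree d)"
    unfolding graph_connected_def hypercube_verts_def
  proof (intro ballI)
    fix u v :: "bool list"
    assume "u \<in> {xs. length xs = d}" "v \<in> {xs. length xs = d}"
    then obtain w where "is_walk (clear_first_tree d) w" "hd w = u" "last w = v"
      using clear_first_tree_walk[of u d v] by auto
    then show "\<exists>xs. is_walk (clear_first_tree d) xs \<and> hd xs = u \<and> last xs = v"
      by blast
  qed
  show "acyclic_graph (clear_first_tree d)"
  proof (rule acyclic_graph_parent_edges)
    fix e
    assume "e \<in> clear_first_tree d"
    then show "\<exists>x. e = {x, clear_first x} \<and> weight (clear_first x) < weight x"
      unfolding clear_first_tree_def using weight_clear_first by fastforce
  qed
qed

lemma clear_first_tree_stretch_le:
  assumes "d \<ge> 1"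
  shows "stretch (hypercube_edges d) (clear_first_tree d) \<le> 2 * d - 1"
proof (rule stretch_le[OF finite_Union_hypercube_edges])
  show "{replicate d False, True # replicate (d - 1) False} \<in> hypercube_edges d"
    using assms by (cases d) (auto simp: hypercube_edge_iff)
  fix u v
  assume "{u, v} \<in> hypercube_edges d"
  then have u: "length u = d" and v: "length v = d" and "u \<noteq> v"
    by (auto simp: hypercube_edge_iff)
  obtain w where w: "is_walk (clear_first_tree d) w" "hd w = u" "last w = v"
      "length w = Suc (weight u + weight v)"
    using clear_first_tree_walk[OF u v] by blast
  have "weight u \<le> d" "weight v \<le> d"
    using u v length_filter_le unfolding weight_def by metis+
  moreover have "weight u \<noteq> d \<or> weight v \<noteq> d"
    using u v \<open>u \<noteq> v\<close> weight_eq_length by metis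
  moreover have "gdist (clear_first_tree d) u v < Suc (weight u + weight v)"
    using gdist_less_length[OF w(1)] w(2-4) by simp
  ultimately show "gdist (clear_first_tree d) u v \<le> 2 * d - 1"
    by linarith
qed

theorem corollary3p3:
  fixes d :: nat
  assumes "d \<ge> 1"
  shows "tree_stretch (hypercube_verts d) (hypercube_edges d) = 2 * d - 1"
  using finite_Union_hypercube_edges clear_first_tree_spanning
    clear_first_tree_stretch_le[OF assms] hypercube_spanning_tree_stretch_ge[OF _ assms]
  by (rule tree_stretch_eqI)

end
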